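(* Let $P$ be a continuous poset. Then (i) $\overline{k[U]}\cong k[\mathrm{Int}\,U]$ for every up-set $U\subseteq P$, where $\mathrm{Int}$ is the interior in the Scott topology; (ii) $\overline{k[D]}\cong k[\mathrm{cl}\,D]$ for every down-set $D\subseteq P$, where $\mathrm{cl}$ is the closure in the Scott topology. For $P=\mathbb R^n$ with the componentwise order one also has (iii) $\underline{k[U]}\cong k[\mathrm{cl}^s U]$ for every up-set $U\subseteq\mathbb R^n$ and (iv) $\underline{k[D]}\cong k[\mathrm{Int}^s D]$ for every down-set $D\subseteq\mathbb R^n$, where $\mathrm{cl}^s$, $\mathrm{Int}^s$ denote closure and interior in the standard Euclidean topology.
   Context: Let $P$ be a poset (as a category, $p\to q$ iff $p\le q$). A subset is directed if nonempty and any two elements have an upper bound in it. $x\ll y$ means: for every directed $D$ whose supremum exists with $y\le\sup D$, some $d\in D$ satisfies $x\le d$. $P$ is continuous if for each $p$ the set $\{x:x\ll p\}$ is directed with supremum $p$ ($\mathbb R^n$ with componentwise order is continuous, with $x\ll y$ iff $x_i<y_i$ for all $i$). A set $U$ is Scott-open if it is an up-set meeting every directed set whose supremum exists and lies in $U$. $k$ is a commutative ring with unity; persistence modules are functors from $P$ to $k$-modules. For a convex $I\subseteq P$ (i.e. $x,z\in I$, $x\le y\le z$ imply $y\in I$), the indicator module $k[I]$ has $k[I]_p=k$ for $p\in I$ and $0$ otherwise, with identity internal maps between points of $I$ and zero otherwise. $\underline M_p=\varprojlim_{x\gg p}M_x$, $\overline M_p=\varinjlim_{x\ll p}M_x$.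 *)

theory Defs
  imports "HOL-Analysis.Analysis" "HOL-Algebra.Module"
begin

definition directed :: "'p::order set \<Rightarrow> bool" where
  "directed D \<longleftrightarrow> D \<noteq> {} \<and> (\<forall>x\<in>D. \<forall>y\<in>D. \<exists>z\<in>D. x \<le> z \<and> y \<le> z)"

definition is_sup :: "'p::order set \<Rightarrow> 'p \<Rightarrow> bool" where
  "is_sup D s \<longleftrightarrow> (\<forall>d\<in>D. d \<le> s) \<and> (\<forall>u. (\<forall>d\<in>D. d \<le> u) \<longrightarrow> s \<le> u)"

definition way_below :: "'p::order \<Rightarrow> 'p \<Rightarrow> bool" where
  "way_below x y \<longleftrightarrow>
     (\<forall>D s. directed D \<and> is_sup D s \<and> y \<le> s \<longrightarrow> (\<exists>d\<in>D. x \<le> d))"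

definition continuous_poset :: "'p::order itself \<Rightarrow> bool" where
  "continuous_poset _ \<longleftrightarrow>
     (\<forall>p::'p. directed {x. way_below x p} \<and> is_sup {x. way_below x p} p)"

definition up_set :: "'p::order set \<Rightarrow> bool" where
  "up_set U \<longleftrightarrow> (\<forall>x y. x \<in> U \<and> x \<le> y \<longrightarrow> y \<in> U)"

definition down_set :: "'p::order set \<Rightarrow> bool" where
  "down_set D \<longleftrightarrow> (\<forall>x y. y \<in> D \<and> x \<le> y \<longrightarrow> x \<in> D)"

definition convex_set_ord :: "'p::order set \<Rightarrow> bool" where
  "convex_set_ord I \<longleftrightarrow> (\<forall>x y z. x \<in> I \<and> z \<in> I \<and> x \<le> y \<and> y \<le> z \<longrightarrow> y \<in> I)"

definition scott_open :: "'p::order set \<Rightarrow> bool" where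
  "scott_open U \<longleftrightarrow> up_set U \<and>
     (\<forall>D s. directed D \<and> is_sup D s \<and> s \<in> U \<longrightarrow> D \<inter> U \<noteq> {})"

definition scott_topology :: "'p::order topology" where
  "scott_topology = topology scott_open"

definition linear_map ::
  "('a, 'c) ring_scheme \<Rightarrow> ('a, 'b) module \<Rightarrow> ('a, 'd) module \<Rightarrow> ('b \<Rightarrow> 'd) \<Rightarrow> bool" where
  "linear_map R M N h \<longleftrightarrow>
     (\<forall>x\<in>carrier M. h x \<in> carrier N) \<and>
     (\<forall>x\<in>carrier M. \<forall>y\<in>carrier M. h (x \<oplus>\<^bsub>M\<^esub> y) = h x \<oplus>\<^bsub>N\<^esub> h y) \<and>
     (\<forall>a\<in>carrier R. \<forall>x\<in>carrier M. h (a \<odot>\<^bsub>M\<^esub> x) = a \<odot>\<^bsub>N\<^esub> h x)"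

type_synonym ('p, 'a, 'b) pmod = "('p \<Rightarrow> ('a, 'b) module) \<times> ('p \<Rightarrow> 'p \<Rightarrow> 'b \<Rightarrow> 'b)"

definition is_pmod :: "('a, 'c) ring_scheme \<Rightarrow> ('p::order, 'a, 'b) pmod \<Rightarrow> bool" where
  "is_pmod R MF \<longleftrightarrow> (case MF of (M, F) \<Rightarrow>
     (\<forall>p. module R (M p)) \<and>
     (\<forall>p q. p \<le> q \<longrightarrow> linear_map R (M p) (M q) (F p q)) \<and>
     (\<forall>p. \<forall>x\<in>carrier (M p). F p p x = x) \<and>
     (\<forall>p q r. p \<le> q \<and> q \<le> r \<longrightarrow> (\<forall>x\<in>carrier (M p). F q r (F p q x) = F p r x)))"

definition pmod_iso :: "('a, 'c) ring_scheme \<Rightarrow> ('p::order, 'a, 'b) pmod \<Rightarrow> ('p, 'a, 'd) pmod \<Rightarrow> bool" where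
  "pmod_iso R MF NG \<longleftrightarrow> (case MF of (M, F) \<Rightarrow> case NG of (N, G) \<Rightarrow>
     (\<exists>\<eta> :: 'p \<Rightarrow> 'b \<Rightarrow> 'd.
        (\<forall>p. linear_map R (M p) (N p) (\<eta> p) \<and> bij_betw (\<eta> p) (carrier (M p)) (carrier (N p))) \<and>
        (\<forall>p q. p \<le> q \<longrightarrow> (\<forall>x\<in>carrier (M p). \<eta> q (F p q x) = G p q (\<eta> p x)))))"

definition ring_module :: "'a ring \<Rightarrow> ('a, 'a) module" where
  "ring_module R = \<lparr>carrier = carrier R, mult = mult R, one = one R,
      zero = zero R, add = add R, smult = mult R\<rparr>"

definition zero_module :: "'a ring \<Rightarrow> ('a, 'a) module" where
  "zero_module R = \<lparr>carrier = {\<zero>\<^bsub>R\<^esub>}, mult = mult R, one = one R,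
      zero = zero R, add = add R, smult = mult R\<rparr>"

definition indicator_pmod :: "'a ring \<Rightarrow> 'p::order set \<Rightarrow> ('p, 'a, 'a) pmod" where
  "indicator_pmod R I =
     ((\<lambda>p. if p \<in> I then ring_module R else zero_module R),
      (\<lambda>p q x. if p \<in> I \<and> q \<in> I then x else \<zero>\<^bsub>R\<^esub>))"

text \<open>Direct limit of (M,F) restricted to an index set J (directed in the
  intended uses): the classes of pairs (x, a), x \<in> J,
  a \<in> M x, where two pairs are identified when they become equal in
  some common upper bound in J.\<close>

definition dlim_rel :: "('p::order, 'a, 'b) pmod \<Rightarrow> 'p set \<Rightarrow> (('p \<times> 'b) \<times> ('p \<times> 'b)) set" where
  "dlim_rel MF J = (case MF of (M, F) \<Rightarrow>
     {((x, a), (y, b)). x \<in> J \<and> y \<in> J \<and> a \<in> carrier (M x) \<and> b \<in> carrier (M y) \<and>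
        (\<exists>z\<in>J. x \<le> z \<and> y \<le> z \<and> F x z a = F y z b)})"

definition dlim_module :: "('p::order, 'a, 'b) pmod \<Rightarrow> 'p set \<Rightarrow> ('a, ('p \<times> 'b) set) module" where
  "dlim_module MF J = (case MF of (M, F) \<Rightarrow>
     \<lparr>carrier = (SIGMA x:J. carrier (M x)) // dlim_rel MF J,
      mult = (\<lambda>_ _. undefined), one = undefined,
      zero = dlim_rel MF J `` {(x, \<zero>\<^bsub>M x\<^esub>) | x. x \<in> J},
      add = (\<lambda>X Y. dlim_rel MF J ``
               {(z, F x z a \<oplus>\<^bsub>M z\<^esub> F y z b) | x a y b z.
                  (x, a) \<in> X \<and> (y, b) \<in> Y \<and> z \<in> J \<and> x \<le> z \<and> y \<le> z}),
      smult = (\<lambda>c X. dlim_rel MF J `` {(x, c \<odot>\<^bsub>M x\<^esub> a) | x a. (x, a) \<in> X})\<rparr>)"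

text \<open>\<overline>M_p = colim_{x \<ll> p} M_x, with the induced maps.\<close>

definition upper_pmod :: "('p::order, 'a, 'b) pmod \<Rightarrow> ('p, 'a, ('p \<times> 'b) set) pmod" where
  "upper_pmod MF =
     ((\<lambda>p. dlim_module MF {x. way_below x p}),
      (\<lambda>p q X. dlim_rel MF {x. way_below x q} `` X))"

definition ilim_module :: "('p::order, 'a, 'b) pmod \<Rightarrow> 'p set \<Rightarrow> ('a, 'p \<Rightarrow> 'b) module" where
  "ilim_module MF J = (case MF of (M, F) \<Rightarrow>
     \<lparr>carrier = {g \<in> Pi\<^sub>E J (\<lambda>x. carrier (M x)).
                  \<forall>x\<in>J. \<forall>y\<in>J. x \<le> y \<longrightarrow> F x y (g x) = g y},
      mult = (\<lambda>_ _. undefined), one = undefined,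
      zero = (\<lambda>x\<in>J. \<zero>\<^bsub>M x\<^esub>),
      add = (\<lambda>g h. \<lambda>x\<in>J. g x \<oplus>\<^bsub>M x\<^esub> h x),
      smult = (\<lambda>c g. \<lambda>x\<in>J. c \<odot>\<^bsub>M x\<^esub> g x)\<rparr>)"

text \<open>\<underline>M_p = lim_{x \<gg> p} M_x, with the induced (restriction) maps.\<close>

definition lower_pmod :: "('p::order, 'a, 'b) pmod \<Rightarrow> ('p, 'a, 'p \<Rightarrow> 'b) pmod" where
  "lower_pmod MF =
     ((\<lambda>p. ilim_module MF {x. way_below p x}),
      (\<lambda>p q g. restrict g {x. way_below q x}))"

end

theory Submission
  imports Defs
begin

text \<open>
  Over a directed index set J, the direct limit of an indicator module k[I] is k when
  I \<inter> J is a nonempty up-set of J, since then each element of I \<inter> J carries its value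
  unchanged to all later indices, and it is 0 when J - I is cofinal in J, since then every
  value is eventually sent to 0. Over J = {x. x \<ll> p} in a continuous poset, the first
  alternative holds for p in the Scott interior of an up-set U (resp. in the Scott closure of
  a down-set D) and the second for all other p; this rests on the sets {y. x \<ll> y} being
  Scott open, which is where interpolation enters. Dually, the inverse limit over the
  filtered set {x. p \<ll> x} is k or 0 according as I \<inter> J is a nonempty down-set of J or
  J - I is coinitial in J; in \<real>^n, where x \<ll> y means x < y componentwise, the first
  alternative holds exactly for p in the Euclidean closure of an up-set (resp. the interior
  of a down-set).
\<close>

lemma directed_upper_bound:
  assumes "directed D" "x \<in> D" "y \<in> D"
  obtains z where "z \<in> D" "x \<le> z" "y \<le> z"
  using assms unfolding directed_def by meson

lemma directed_finite_upper_bound: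
  assumes "directed D" "finite F" "F \<subseteq> D"
  shows "\<exists>d\<in>D. \<forall>f\<in>F. f \<le> d"
  using assms(2,3)
proof (induction F rule: finite_induct)
  case empty
  then show ?case using assms(1) unfolding directed_def by auto
next
  case (insert f F)
  then obtain d where d: "d \<in> D" "\<forall>g\<in>F. g \<le> d" by auto
  obtain e where e: "e \<in> D" "f \<le> e" "d \<le> e"
    using directed_upper_bound[OF assms(1)] insert.prems d(1) by (metis insert_subset)
  have "\<forall>g\<in>insert f F. g \<le> e" using d(2) e(2,3) order_trans by auto
  with e(1) show ?case by blast
qed

definition down_directed :: "'p::order set \<Rightarrow> bool" where
  "down_directed J \<longleftrightarrow> (\<forall>x\<in>J. \<forall>y\<in>J. \<exists>z\<in>J. z \<le> x \<and> z \<le> y)"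

lemma down_directed_lower_bound:
  assumes "down_directed J" "x \<in> J" "y \<in> J"
  obtains z where "z \<in> J" "z \<le> x" "z \<le> y"
  using assms unfolding down_directed_def by meson

definition up_closed_in :: "'p::order set \<Rightarrow> 'p set \<Rightarrow> bool" where
  "up_closed_in J I \<longleftrightarrow> (\<forall>x\<in>J. \<forall>y\<in>J. x \<in> I \<longrightarrow> x \<le> y \<longrightarrow> y \<in> I)"

definition down_closed_in :: "'p::order set \<Rightarrow> 'p set \<Rightarrow> bool" where
  "down_closed_in J I \<longleftrightarrow> (\<forall>x\<in>J. \<forall>y\<in>J. y \<in> I \<longrightarrow> x \<le> y \<longrightarrow> x \<in> I)"

lemma down_closed_inD: "down_closed_in J I \<Longrightarrow> x \<in> J \<Longrightarrow> y \<in> J \<Longrightarrow> y \<in> I \<Longrightarrow> x \<le> y \<Longrightarrow> x \<in> I"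
  unfolding down_closed_in_def by blast

definition cofinal_in :: "'p::order set \<Rightarrow> 'p set \<Rightarrow> bool" where
  "cofinal_in S J \<longleftrightarrow> (\<forall>x\<in>J. \<exists>z\<in>S. x \<le> z)"

definition coinitial_in :: "'p::order set \<Rightarrow> 'p set \<Rightarrow> bool" where
  "coinitial_in S J \<longleftrightarrow> (\<forall>x\<in>J. \<exists>z\<in>S. z \<le> x)"

lemma way_below_imp_le: "way_below x y \<Longrightarrow> x \<le> y"
  unfolding way_below_def
  by (drule spec[of _ "{y}"], drule spec[of _ y]) (auto simp: directed_def is_sup_def)

lemma way_below_mono_right: "way_below x p \<Longrightarrow> p \<le> q \<Longrightarrow> way_below x q"
  unfolding way_below_def by (meson order_trans)

lemma way_below_mono_left: "y \<le> x \<Longrightarrow> way_below x p \<Longrightarrow> way_below y p"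
  unfolding way_below_def by (meson order_trans)

lemma ring_module_simps [simp]:
  "carrier (ring_module R) = carrier R" "add (ring_module R) = add R" "smult (ring_module R) = mult R"
  by (simp_all add: ring_module_def)

lemma zero_module_simps [simp]:
  "carrier (zero_module R) = {\<zero>\<^bsub>R\<^esub>}" "add (zero_module R) = add R" "smult (zero_module R) = mult R"
  by (simp_all add: zero_module_def)

lemma linear_map_to_zero_module: "ring R \<Longrightarrow> linear_map R M (zero_module R) (\<lambda>_. \<zero>\<^bsub>R\<^esub>)"
  by (simp add: linear_map_def ring.ring_simprules)

definition indicator_fiber :: "'a ring \<Rightarrow> 'p set \<Rightarrow> 'p \<Rightarrow> 'a set" where
  "indicator_fiber R I x = (if x \<in> I then carrier R else {\<zero>\<^bsub>R\<^esub>})"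

lemma indicator_pmod_simps:
  "carrier (fst (indicator_pmod R I) x) = indicator_fiber R I x"
  "add (fst (indicator_pmod R I) x) = add R"
  "smult (fst (indicator_pmod R I) x) = mult R"
  "snd (indicator_pmod R I) x y a = (if x \<in> I \<and> y \<in> I then a else \<zero>\<^bsub>R\<^esub>)"
  by (simp_all add: indicator_pmod_def ring_module_def zero_module_def indicator_fiber_def)

lemma fst_indicator_pmod:
  "fst (indicator_pmod R I) x = (if x \<in> I then ring_module R else zero_module R)"
  by (simp add: indicator_pmod_def)

lemma indicator_fiber_subset: "ring R \<Longrightarrow> indicator_fiber R I x \<subseteq> carrier R"
  by (auto simp: indicator_fiber_def ring.ring_simprules)

lemma zero_in_indicator_fiber: "ring R \<Longrightarrow> \<zero>\<^bsub>R\<^esub> \<in> indicator_fiber R I x"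
  by (auto simp: indicator_fiber_def ring.ring_simprules)

lemma indicator_map_up_closed:
  assumes "up_closed_in J I" "x \<in> J" "z \<in> J" "x \<le> z" "a \<in> indicator_fiber R I x"
  shows "(if x \<in> I \<and> z \<in> I then a else \<zero>\<^bsub>R\<^esub>) = a"
proof (cases "x \<in> I")
  case True
  then have "z \<in> I" using assms(1-4) unfolding up_closed_in_def by blast
  with True show ?thesis by simp
qed (use assms(5) in \<open>simp add: indicator_fiber_def\<close>)

section \<open>Direct limits of indicator modules\<close>

lemma dlim_rel_indicator_iff:
  "((x, a), (y, b)) \<in> dlim_rel (indicator_pmod R I) J \<longleftrightarrow>
     x \<in> J \<and> y \<in> J \<and> a \<in> indicator_fiber R I x \<and> b \<in> indicator_fiber R I y \<and>
     (\<exists>z\<in>J. x \<le> z \<and> y \<le> z \<and>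
        (if x \<in> I \<and> z \<in> I then a else \<zero>\<^bsub>R\<^esub>) = (if y \<in> I \<and> z \<in> I then b else \<zero>\<^bsub>R\<^esub>))"
  by (simp add: dlim_rel_def case_prod_beta indicator_pmod_simps)

lemma dlim_module_indicator_simps:
  "carrier (dlim_module (indicator_pmod R I) J) =
     (SIGMA x:J. indicator_fiber R I x) // dlim_rel (indicator_pmod R I) J"
  "add (dlim_module (indicator_pmod R I) J) X Y = dlim_rel (indicator_pmod R I) J ``
     {(z, (if x \<in> I \<and> z \<in> I then a else \<zero>\<^bsub>R\<^esub>) \<oplus>\<^bsub>R\<^esub> (if y \<in> I \<and> z \<in> I then b else \<zero>\<^bsub>R\<^esub>))
        | x a y b z. (x, a) \<in> X \<and> (y, b) \<in> Y \<and> z \<in> J \<and> x \<le> z \<and> y \<le> z}"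
  "smult (dlim_module (indicator_pmod R I) J) c X =
     dlim_rel (indicator_pmod R I) J `` {(x, c \<otimes>\<^bsub>R\<^esub> a) | x a. (x, a) \<in> X}"
  by (simp_all add: dlim_module_def case_prod_beta indicator_pmod_simps)

text \<open>When I \<inter> J is an up-set of J, the classes of the direct limit are exactly the sets of
  all pairs carrying one fixed value.\<close>

definition const_class :: "'a ring \<Rightarrow> 'p set \<Rightarrow> 'p set \<Rightarrow> 'a \<Rightarrow> ('p \<times> 'a) set" where
  "const_class R I J v = {x \<in> J. v \<in> indicator_fiber R I x} \<times> {v}"

definition class_value :: "('p \<times> 'a) set \<Rightarrow> 'a" where
  "class_value X = (THE a. \<exists>x. (x, a) \<in> X)"

lemma class_value_Times: "A \<noteq> {} \<Longrightarrow> class_value (A \<times> {v}) = v"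
  unfolding class_value_def by (rule the_equality) auto

lemma class_value_const_class:
  "x \<in> J \<Longrightarrow> v \<in> indicator_fiber R I x \<Longrightarrow> class_value (const_class R I J v) = v"
  unfolding const_class_def by (rule class_value_Times) blast

lemma dlim_rel_indicator_up_closed_iff:
  assumes dir: "directed J" and up: "up_closed_in J I"
  shows "((x, a), (y, b)) \<in> dlim_rel (indicator_pmod R I) J \<longleftrightarrow>
     x \<in> J \<and> y \<in> J \<and> a \<in> indicator_fiber R I x \<and> b \<in> indicator_fiber R I y \<and> a = b"
proof -
  have "(\<exists>z\<in>J. x \<le> z \<and> y \<le> z \<and>
          (if x \<in> I \<and> z \<in> I then a else \<zero>\<^bsub>R\<^esub>) = (if y \<in> I \<and> z \<in> I then b else \<zero>\<^bsub>R\<^esub>))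
        \<longleftrightarrow> a = b"
    if pairs: "x \<in> J" "y \<in> J" "a \<in> indicator_fiber R I x" "b \<in> indicator_fiber R I y"
  proof -
    have "(if x \<in> I \<and> z \<in> I then a else \<zero>\<^bsub>R\<^esub>) = a" "(if y \<in> I \<and> z \<in> I then b else \<zero>\<^bsub>R\<^esub>) = b"
      if "z \<in> J" "x \<le> z" "y \<le> z" for z
      using indicator_map_up_closed[OF up pairs(1) that(1,2) pairs(3)]
        indicator_map_up_closed[OF up pairs(2) that(1,3) pairs(4)] .
    moreover obtain z where "z \<in> J" "x \<le> z" "y \<le> z"
      using dir pairs unfolding directed_def by blast
    ultimately show ?thesis by metis
  qed
  then show ?thesis unfolding dlim_rel_indicator_iff by blast
qed

lemma dlim_rel_Image_up_closed:
  fixes R :: "'a ring" and T :: "('p::order \<times> 'a) set"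
  assumes dir: "directed J" and up: "up_closed_in J I"
    and "(x, v) \<in> T" "x \<in> J" "v \<in> indicator_fiber R I x" and vals: "snd ` T \<subseteq> {v}"
  shows "dlim_rel (indicator_pmod R I) J `` T = const_class R I J v"
proof (rule Set.set_eqI)
  fix s :: "'p \<times> 'a"
  obtain w c where s: "s = (w, c)" by (cases s)
  have "s \<in> dlim_rel (indicator_pmod R I) J `` T \<longleftrightarrow>
      (\<exists>y b. (y, b) \<in> T \<and> ((y, b), (w, c)) \<in> dlim_rel (indicator_pmod R I) J)"
    unfolding s Image_iff by auto
  also have "\<dots> \<longleftrightarrow> w \<in> J \<and> c \<in> indicator_fiber R I w \<and> c = v"
  proof
    assume "\<exists>y b. (y, b) \<in> T \<and> ((y, b), (w, c)) \<in> dlim_rel (indicator_pmod R I) J"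
    then obtain y b where "(y, b) \<in> T" "((y, b), (w, c)) \<in> dlim_rel (indicator_pmod R I) J"
      by blast
    moreover from \<open>(y, b) \<in> T\<close> vals have "b = v" by force
    ultimately show "w \<in> J \<and> c \<in> indicator_fiber R I w \<and> c = v"
      by (simp add: dlim_rel_indicator_up_closed_iff[OF dir up])
  next
    assume "w \<in> J \<and> c \<in> indicator_fiber R I w \<and> c = v"
    then have "((x, v), (w, c)) \<in> dlim_rel (indicator_pmod R I) J"
      using assms(4,5) by (auto simp: dlim_rel_indicator_up_closed_iff[OF dir up])
    then show "\<exists>y b. (y, b) \<in> T \<and> ((y, b), (w, c)) \<in> dlim_rel (indicator_pmod R I) J"
      using assms(3) by blast
  qed
  also have "\<dots> \<longleftrightarrow> s \<in> const_class R I J v"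
    unfolding s const_class_def by blast
  finally show "s \<in> dlim_rel (indicator_pmod R I) J `` T \<longleftrightarrow> s \<in> const_class R I J v" .
qed

lemma carrier_dlim_up_closed:
  assumes R: "ring R" and dir: "directed J" and up: "up_closed_in J I"
    and x0: "x0 \<in> J" "x0 \<in> I"
  shows "carrier (dlim_module (indicator_pmod R I) J) = const_class R I J ` carrier R"
proof -
  have cls: "dlim_rel (indicator_pmod R I) J `` {(x, a)} = const_class R I J a"
    if "x \<in> J" "a \<in> indicator_fiber R I x" for x a
    using dlim_rel_Image_up_closed[OF dir up, of x a] that by simp
  show ?thesis
  proof (rule Set.set_eqI, rule iffI)
    fix X assume "X \<in> carrier (dlim_module (indicator_pmod R I) J)"
    then obtain x a where xa: "x \<in> J" "a \<in> indicator_fiber R I x"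
      "X = dlim_rel (indicator_pmod R I) J `` {(x, a)}"
      unfolding dlim_module_indicator_simps by (elim quotientE) blast
    then have "X = const_class R I J a" using cls by simp
    moreover have "a \<in> carrier R" using subsetD[OF indicator_fiber_subset[OF R] xa(2)] .
    ultimately show "X \<in> const_class R I J ` carrier R" by (rule image_eqI)
  next
    fix X assume "X \<in> const_class R I J ` carrier R"
    then obtain a where a: "a \<in> carrier R" "X = const_class R I J a" by blast
    then have "a \<in> indicator_fiber R I x0" using x0(2) by (simp add: indicator_fiber_def)
    then have "X = dlim_rel (indicator_pmod R I) J `` {(x0, a)}"
      "(x0, a) \<in> (SIGMA x:J. indicator_fiber R I x)"
      using cls[OF x0(1)] a(2) x0(1) by simp_all
    then show "X \<in> carrier (dlim_module (indicator_pmod R I) J)"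
      unfolding dlim_module_indicator_simps by (simp add: quotientI)
  qed
qed

lemma indicator_map_const_class:
  assumes "up_closed_in J I" "(x, a') \<in> const_class R I J a" "z \<in> J" "x \<le> z"
  shows "(if x \<in> I \<and> z \<in> I then a' else \<zero>\<^bsub>R\<^esub>) = a"
proof -
  have "x \<in> J" "a \<in> indicator_fiber R I x" and a': "a' = a"
    using assms(2) by (auto simp: const_class_def)
  from indicator_map_up_closed[OF assms(1) this(1) assms(3,4) this(2)] show ?thesis
    unfolding a' .
qed

lemma add_dlim_const_class:
  assumes R: "ring R" and dir: "directed J" and up: "up_closed_in J I"
    and x0: "x0 \<in> J" "x0 \<in> I" and a: "a \<in> carrier R" and b: "b \<in> carrier R"
  shows "add (dlim_module (indicator_pmod R I) J) (const_class R I J a) (const_class R I J b)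
    = const_class R I J (a \<oplus>\<^bsub>R\<^esub> b)"
  unfolding dlim_module_indicator_simps
proof (rule dlim_rel_Image_up_closed[OF dir up _ x0(1)])
  show "a \<oplus>\<^bsub>R\<^esub> b \<in> indicator_fiber R I x0"
    using x0 a b R by (simp add: indicator_fiber_def ring.ring_simprules)
  have "(x0, a) \<in> const_class R I J a" "(x0, b) \<in> const_class R I J b"
    using x0 a b by (simp_all add: const_class_def indicator_fiber_def)
  then show "(x0, a \<oplus>\<^bsub>R\<^esub> b) \<in> {(z, (if x \<in> I \<and> z \<in> I then a' else \<zero>\<^bsub>R\<^esub>) \<oplus>\<^bsub>R\<^esub>
      (if y \<in> I \<and> z \<in> I then b' else \<zero>\<^bsub>R\<^esub>)) | x a' y b' z.
      (x, a') \<in> const_class R I J a \<and> (y, b') \<in> const_class R I J b \<and> z \<in> J \<and> x \<le> z \<and> y \<le> z}"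
    using x0 by (intro CollectI exI[of _ x0] exI[of _ a] exI[of _ b]) simp
  show "snd ` {(z, (if x \<in> I \<and> z \<in> I then a' else \<zero>\<^bsub>R\<^esub>) \<oplus>\<^bsub>R\<^esub>
      (if y \<in> I \<and> z \<in> I then b' else \<zero>\<^bsub>R\<^esub>)) | x a' y b' z.
      (x, a') \<in> const_class R I J a \<and> (y, b') \<in> const_class R I J b \<and> z \<in> J \<and> x \<le> z \<and> y \<le> z}
    \<subseteq> {a \<oplus>\<^bsub>R\<^esub> b}"
    by (auto simp: indicator_map_const_class[OF up] split del: if_split)
qed

lemma smult_dlim_const_class:
  assumes R: "ring R" and dir: "directed J" and up: "up_closed_in J I"
    and x0: "x0 \<in> J" "x0 \<in> I" and a: "a \<in> carrier R" and c: "c \<in> carrier R"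
  shows "smult (dlim_module (indicator_pmod R I) J) c (const_class R I J a)
    = const_class R I J (c \<otimes>\<^bsub>R\<^esub> a)"
  unfolding dlim_module_indicator_simps
proof (rule dlim_rel_Image_up_closed[OF dir up _ x0(1)])
  show "c \<otimes>\<^bsub>R\<^esub> a \<in> indicator_fiber R I x0"
    using x0 a c R by (simp add: indicator_fiber_def ring.ring_simprules)
  show "(x0, c \<otimes>\<^bsub>R\<^esub> a) \<in> {(x, c \<otimes>\<^bsub>R\<^esub> a') | x a'. (x, a') \<in> const_class R I J a}"
    using x0 a by (auto simp: const_class_def indicator_fiber_def)
  show "snd ` {(x, c \<otimes>\<^bsub>R\<^esub> a') | x a'. (x, a') \<in> const_class R I J a} \<subseteq> {c \<otimes>\<^bsub>R\<^esub> a}"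
    by (auto simp: const_class_def)
qed

lemma dlim_up_closed_iso_ring:
  assumes R: "ring R" and dir: "directed J" and up: "up_closed_in J I"
    and x0: "x0 \<in> J" "x0 \<in> I"
  shows "linear_map R (dlim_module (indicator_pmod R I) J) (ring_module R) class_value \<and>
    bij_betw class_value (carrier (dlim_module (indicator_pmod R I) J)) (carrier (ring_module R))"
proof -
  have val: "class_value (const_class R I J a) = a" if "a \<in> carrier R" for a
    using class_value_const_class[OF x0(1), of a R I] x0(2) that by (simp add: indicator_fiber_def)
  note carrier = carrier_dlim_up_closed[OF R dir up x0]
  have "linear_map R (dlim_module (indicator_pmod R I) J) (ring_module R) class_value"
    unfolding linear_map_def carrier
    using val add_dlim_const_class[OF R dir up x0] smult_dlim_const_class[OF R dir up x0] R
    by (auto simp: ring.ring_simprules)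
  moreover have "bij_betw class_value (const_class R I J ` carrier R) (carrier R)"
    by (rule bij_betw_imageI) (auto simp: inj_on_def val image_image)
  ultimately show ?thesis by (simp add: carrier)
qed

lemma carrier_dlim_cofinal_complement:
  assumes R: "ring R" and dir: "directed J" and cof: "cofinal_in (J - I) J"
  shows "carrier (dlim_module (indicator_pmod R I) J) = {SIGMA x:J. indicator_fiber R I x}"
proof -
  let ?\<Sigma> = "SIGMA x:J. indicator_fiber R I x"
  have related: "((x, a), (y, b)) \<in> dlim_rel (indicator_pmod R I) J"
    if "(x, a) \<in> ?\<Sigma>" "(y, b) \<in> ?\<Sigma>" for x y a b
  proof -
    from that have "x \<in> J" "y \<in> J" by simp_all
    then obtain w where "w \<in> J" "x \<le> w" "y \<le> w" using dir directed_upper_bound by metis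
    moreover obtain z where "z \<in> J - I" "w \<le> z"
      using cof \<open>w \<in> J\<close> unfolding cofinal_in_def by meson
    ultimately have "z \<in> J" "z \<notin> I" "x \<le> z" "y \<le> z" by auto
    with that show ?thesis unfolding dlim_rel_indicator_iff by auto
  qed
  have "dlim_rel (indicator_pmod R I) J `` {s} = ?\<Sigma>" if "s \<in> ?\<Sigma>" for s
  proof (rule Set.set_eqI, rule iffI)
    fix t assume "t \<in> dlim_rel (indicator_pmod R I) J `` {s}"
    then show "t \<in> ?\<Sigma>" by (cases s, cases t) (simp add: dlim_rel_indicator_iff)
  next
    fix t assume "t \<in> ?\<Sigma>"
    then show "t \<in> dlim_rel (indicator_pmod R I) J `` {s}"
      using related[of "fst s" "snd s" "fst t" "snd t"] that by simp
  qed
  moreover obtain x where "x \<in> J" using dir unfolding directed_def by auto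
  then have "?\<Sigma> \<noteq> {}" using zero_in_indicator_fiber[OF R, of I x] by auto
  ultimately show ?thesis
    unfolding dlim_module_indicator_simps quotient_def by auto
qed

lemma dlim_indicator_iso_fiber:
  assumes R: "ring R" and dir: "directed J"
    and inside: "b \<Longrightarrow> up_closed_in J I \<and> (\<exists>x\<in>J. x \<in> I)"
    and outside: "\<not> b \<Longrightarrow> cofinal_in (J - I) J"
  shows "linear_map R (dlim_module (indicator_pmod R I) J)
      (if b then ring_module R else zero_module R) (if b then class_value else (\<lambda>_. \<zero>\<^bsub>R\<^esub>)) \<and>
    bij_betw (if b then class_value else (\<lambda>_. \<zero>\<^bsub>R\<^esub>))
      (carrier (dlim_module (indicator_pmod R I) J)) (carrier (if b then ring_module R else zero_module R))"
proof (cases b)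
  case True
  with inside obtain x0 where "x0 \<in> J" "x0 \<in> I" by blast
  with True show ?thesis using dlim_up_closed_iso_ring[OF R dir] inside by simp
next
  case False
  then show ?thesis
    using linear_map_to_zero_module[OF R] carrier_dlim_cofinal_complement[OF R dir outside]
    by (simp add: bij_betw_def)
qed

lemma class_value_dlim_transition_up_closed:
  assumes R: "ring R" and dir': "directed J'" and up': "up_closed_in J' I" and sub: "J \<subseteq> J'"
    and dir: "directed J" and x0: "x0 \<in> J" "x0 \<in> I"
    and X: "X \<in> carrier (dlim_module (indicator_pmod R I) J)"
  shows "class_value (dlim_rel (indicator_pmod R I) J' `` X) = class_value X"
proof -
  have up: "up_closed_in J I" using up' sub unfolding up_closed_in_def by blast
  obtain a where a: "a \<in> carrier R" "X = const_class R I J a"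
    using X carrier_dlim_up_closed[OF R dir up x0] by auto
  have fib: "a \<in> indicator_fiber R I x0" using a(1) x0(2) by (simp add: indicator_fiber_def)
  have x0': "x0 \<in> J'" using x0(1) sub by auto
  have "dlim_rel (indicator_pmod R I) J' `` X = const_class R I J' a"
  proof (rule dlim_rel_Image_up_closed[OF dir' up' _ x0' fib])
    show "(x0, a) \<in> X" "snd ` X \<subseteq> {a}"
      using a(2) x0(1) fib by (auto simp: const_class_def)
  qed
  then show ?thesis
    using a(2) class_value_const_class[OF x0' fib] class_value_const_class[OF x0(1) fib] by simp
qed

lemma class_value_dlim_transition_cofinal_complement:
  assumes R: "ring R" and dir': "directed J'" and up': "up_closed_in J' I" and sub: "J \<subseteq> J'"
    and dir: "directed J" and cof: "cofinal_in (J - I) J"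
    and X: "X \<in> carrier (dlim_module (indicator_pmod R I) J)"
  shows "class_value (dlim_rel (indicator_pmod R I) J' `` X) = \<zero>\<^bsub>R\<^esub>"
proof -
  txt \<open>An element of I in J would lie below an element of J - I, contradicting the up-closure
    of I in J'.\<close>
  have outside_I: "y \<notin> I" if "y \<in> J" for y
  proof
    assume "y \<in> I"
    obtain z where "z \<in> J - I" "y \<le> z"
      using cof \<open>y \<in> J\<close> unfolding cofinal_in_def by meson
    with \<open>y \<in> I\<close> \<open>y \<in> J\<close> sub up' show False
      unfolding up_closed_in_def by auto
  qed
  obtain y where y: "y \<in> J" using dir unfolding directed_def by auto
  with sub have y': "y \<in> J'" by auto
  have X_eq: "X = (SIGMA x:J. indicator_fiber R I x)"
    using X carrier_dlim_cofinal_complement[OF R dir cof] by simp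
  have "dlim_rel (indicator_pmod R I) J' `` X = const_class R I J' \<zero>\<^bsub>R\<^esub>"
  proof (rule dlim_rel_Image_up_closed[OF dir' up' _ y'])
    show "(y, \<zero>\<^bsub>R\<^esub>) \<in> X" "\<zero>\<^bsub>R\<^esub> \<in> indicator_fiber R I y"
      using y zero_in_indicator_fiber[OF R] X_eq by auto
    show "snd ` X \<subseteq> {\<zero>\<^bsub>R\<^esub>}"
      using X_eq outside_I by (auto simp: indicator_fiber_def)
  qed
  then show ?thesis using class_value_const_class[OF y' zero_in_indicator_fiber[OF R]] by simp
qed

lemma upper_pmod_indicator_iso:
  fixes R :: "'a ring" and I S :: "'p::order set"
  assumes R: "ring R" and dir: "\<And>p::'p. directed {x. way_below x p}"
    and inside: "\<And>p. p \<in> S \<Longrightarrow> up_closed_in {x. way_below x p} I \<and> (\<exists>x. way_below x p \<and> x \<in> I)"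
    and outside: "\<And>p. p \<notin> S \<Longrightarrow> cofinal_in ({x. way_below x p} - I) {x. way_below x p}"
  shows "pmod_iso R (upper_pmod (indicator_pmod R I)) (indicator_pmod R S)"
proof -
  define W where "W p = {x. way_below x p}" for p :: 'p
  define \<eta> where "\<eta> p = (if p \<in> S then class_value :: ('p \<times> 'a) set \<Rightarrow> 'a else (\<lambda>_. \<zero>\<^bsub>R\<^esub>))"
    for p :: 'p
  have W_mono: "W p \<subseteq> W q" if "p \<le> q" for p q
    unfolding W_def using way_below_mono_right that by auto
  have dirW: "directed (W p)" for p unfolding W_def by (rule dir)
  have upW: "up_closed_in (W p) I" and baseW: "\<exists>x\<in>W p. x \<in> I" if "p \<in> S" for p
    using inside[OF that] unfolding W_def by auto
  have cofW: "cofinal_in (W p - I) (W p)" if "p \<notin> S" for p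
    using outside[OF that] unfolding W_def by auto
  have iso: "linear_map R (dlim_module (indicator_pmod R I) (W p)) (fst (indicator_pmod R S) p) (\<eta> p) \<and>
      bij_betw (\<eta> p) (carrier (dlim_module (indicator_pmod R I) (W p))) (carrier (fst (indicator_pmod R S) p))"
    for p
    unfolding \<eta>_def fst_indicator_pmod
    by (rule dlim_indicator_iso_fiber[OF R dirW]) (simp_all add: upW baseW cofW)
  have natural: "\<eta> q (dlim_rel (indicator_pmod R I) (W q) `` X) = snd (indicator_pmod R S) p q (\<eta> p X)"
    if pq: "p \<le> q" and X: "X \<in> carrier (dlim_module (indicator_pmod R I) (W p))" for p q X
  proof (cases "q \<in> S")
    case qS: True
    show ?thesis
    proof (cases "p \<in> S")
      case True
      then obtain x0 where "x0 \<in> W p" "x0 \<in> I" using baseW by blast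
      with True qS show ?thesis
        using class_value_dlim_transition_up_closed[OF R dirW upW[OF qS] W_mono[OF pq] dirW _ _ X]
        by (simp add: \<eta>_def indicator_pmod_simps)
    next
      case False
      with qS show ?thesis
        using class_value_dlim_transition_cofinal_complement[OF R dirW upW[OF qS] W_mono[OF pq] dirW
            cofW[OF False] X]
        by (simp add: \<eta>_def indicator_pmod_simps)
    qed
  qed (simp add: \<eta>_def indicator_pmod_simps)
  have "upper_pmod (indicator_pmod R I) =
      ((\<lambda>p. dlim_module (indicator_pmod R I) (W p)), (\<lambda>p q X. dlim_rel (indicator_pmod R I) (W q) `` X))"
    by (simp add: upper_pmod_def W_def)
  then show ?thesis
    unfolding pmod_iso_def case_prod_beta by (intro exI[of _ \<eta>]) (simp add: iso natural)
qed

section \<open>Inverse limits of indicator modules\<close>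

lemma ilim_module_indicator_simps:
  "carrier (ilim_module (indicator_pmod R I) J) =
     {g \<in> Pi\<^sub>E J (indicator_fiber R I).
        \<forall>x\<in>J. \<forall>y\<in>J. x \<le> y \<longrightarrow> (if x \<in> I \<and> y \<in> I then g x else \<zero>\<^bsub>R\<^esub>) = g y}"
  "add (ilim_module (indicator_pmod R I) J) g h = (\<lambda>x\<in>J. g x \<oplus>\<^bsub>R\<^esub> h x)"
  "smult (ilim_module (indicator_pmod R I) J) c g = (\<lambda>x\<in>J. c \<otimes>\<^bsub>R\<^esub> g x)"
  by (simp_all add: ilim_module_def case_prod_beta indicator_pmod_simps)

definition const_family :: "'a ring \<Rightarrow> 'p set \<Rightarrow> 'p set \<Rightarrow> 'a \<Rightarrow> 'p \<Rightarrow> 'a" where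
  "const_family R I J c = (\<lambda>x\<in>J. if x \<in> I then c else \<zero>\<^bsub>R\<^esub>)"

lemma carrier_ilim_down_closed:
  assumes R: "ring R" and dir: "down_directed J" and down: "down_closed_in J I"
    and x0: "x0 \<in> J" "x0 \<in> I"
  shows "carrier (ilim_module (indicator_pmod R I) J) = const_family R I J ` carrier R"
proof (rule Set.set_eqI, rule iffI)
  fix g assume "g \<in> carrier (ilim_module (indicator_pmod R I) J)"
  then have g: "g \<in> Pi\<^sub>E J (indicator_fiber R I)"
    and compat: "\<And>x y. x \<in> J \<Longrightarrow> y \<in> J \<Longrightarrow> x \<le> y \<Longrightarrow>
        (if x \<in> I \<and> y \<in> I then g x else \<zero>\<^bsub>R\<^esub>) = g y"
    unfolding ilim_module_indicator_simps by auto
  have const: "g y = g x0" if y: "y \<in> J" "y \<in> I" for y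
  proof -
    obtain z where z: "z \<in> J" "z \<le> x0" "z \<le> y"
      using down_directed_lower_bound[OF dir x0(1) y(1)] .
    then have "z \<in> I" using down_closed_inD[OF down] x0 by blast
    then show ?thesis using compat[OF z(1) y(1) z(3)] compat[OF z(1) x0(1) z(2)] y(2) x0(2)
      by simp
  qed
  have "g = const_family R I J (g x0)"
  proof
    fix y show "g y = const_family R I J (g x0) y"
      using g const by (cases "y \<in> J") (auto simp: const_family_def indicator_fiber_def PiE_iff extensional_def)
  qed
  moreover have "g x0 \<in> carrier R" using PiE_mem[OF g x0(1)] x0(2) by (simp add: indicator_fiber_def)
  ultimately show "g \<in> const_family R I J ` carrier R" by (rule image_eqI)
next
  fix g assume "g \<in> const_family R I J ` carrier R"
  then obtain c where c: "c \<in> carrier R" "g = const_family R I J c" by blast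
  have "(if x \<in> I \<and> y \<in> I then g x else \<zero>\<^bsub>R\<^esub>) = g y" if "x \<in> J" "y \<in> J" "x \<le> y" for x y
  proof (cases "y \<in> I")
    case True
    then have "x \<in> I" using down_closed_inD[OF down] that by blast
    with True that c(2) show ?thesis by (simp add: const_family_def)
  qed (use that c(2) in \<open>simp add: const_family_def\<close>)
  moreover have "g \<in> Pi\<^sub>E J (indicator_fiber R I)"
    using c R by (auto simp: const_family_def indicator_fiber_def PiE_iff ring.ring_simprules)
  ultimately show "g \<in> carrier (ilim_module (indicator_pmod R I) J)"
    unfolding ilim_module_indicator_simps by auto
qed

lemma ilim_down_closed_iso_ring:
  assumes R: "ring R" and dir: "down_directed J" and down: "down_closed_in J I"
    and x0: "x0 \<in> J" "x0 \<in> I"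
  shows "linear_map R (ilim_module (indicator_pmod R I) J) (ring_module R) (\<lambda>g. g x0) \<and>
    bij_betw (\<lambda>g. g x0) (carrier (ilim_module (indicator_pmod R I) J)) (carrier (ring_module R))"
proof -
  have val: "const_family R I J c x0 = c" for c using x0 by (simp add: const_family_def)
  note carrier = carrier_ilim_down_closed[OF R dir down x0]
  have "linear_map R (ilim_module (indicator_pmod R I) J) (ring_module R) (\<lambda>g. g x0)"
    unfolding linear_map_def carrier using x0(1) by (auto simp: val ilim_module_indicator_simps)
  moreover have "bij_betw (\<lambda>g. g x0) (const_family R I J ` carrier R) (carrier R)"
    by (rule bij_betw_imageI) (auto simp: inj_on_def val image_image)
  ultimately show ?thesis by (simp add: carrier)
qed

lemma carrier_ilim_coinitial_complement:
  assumes R: "ring R" and coi: "coinitial_in (J - I) J"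
  shows "carrier (ilim_module (indicator_pmod R I) J) = {\<lambda>x\<in>J. \<zero>\<^bsub>R\<^esub>}"
proof (rule Set.set_eqI, rule iffI)
  fix g assume "g \<in> carrier (ilim_module (indicator_pmod R I) J)"
  then have g: "g \<in> Pi\<^sub>E J (indicator_fiber R I)"
    and compat: "\<And>x y. x \<in> J \<Longrightarrow> y \<in> J \<Longrightarrow> x \<le> y \<Longrightarrow>
        (if x \<in> I \<and> y \<in> I then g x else \<zero>\<^bsub>R\<^esub>) = g y"
    unfolding ilim_module_indicator_simps by auto
  have "g y = \<zero>\<^bsub>R\<^esub>" if y: "y \<in> J" for y
  proof -
    obtain z where "z \<in> J - I" "z \<le> y" using coi y unfolding coinitial_in_def by meson
    then show ?thesis using compat[of z y] y by simp
  qed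
  with g have "g = (\<lambda>x\<in>J. \<zero>\<^bsub>R\<^esub>)" by (auto simp: PiE_iff extensional_def)
  then show "g \<in> {\<lambda>x\<in>J. \<zero>\<^bsub>R\<^esub>}" by simp
next
  fix g assume "g \<in> {\<lambda>x\<in>J. \<zero>\<^bsub>R\<^esub>}"
  then show "g \<in> carrier (ilim_module (indicator_pmod R I) J)"
    using zero_in_indicator_fiber[OF R, of I] by (simp add: ilim_module_indicator_simps Pi_iff)
qed

lemma ilim_indicator_iso_fiber:
  assumes R: "ring R" and dir: "down_directed J"
    and inside: "b \<Longrightarrow> down_closed_in J I \<and> x0 \<in> J \<and> x0 \<in> I"
    and outside: "\<not> b \<Longrightarrow> coinitial_in (J - I) J"
  shows "linear_map R (ilim_module (indicator_pmod R I) J)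
      (if b then ring_module R else zero_module R) (if b then (\<lambda>g. g x0) else (\<lambda>_. \<zero>\<^bsub>R\<^esub>)) \<and>
    bij_betw (if b then (\<lambda>g. g x0) else (\<lambda>_. \<zero>\<^bsub>R\<^esub>))
      (carrier (ilim_module (indicator_pmod R I) J)) (carrier (if b then ring_module R else zero_module R))"
proof (cases b)
  case True
  with inside show ?thesis using ilim_down_closed_iso_ring[OF R dir] by simp
next
  case False
  then show ?thesis
    using linear_map_to_zero_module[OF R] carrier_ilim_coinitial_complement[OF R outside]
    by (simp add: bij_betw_def)
qed

lemma ilim_down_closed_value_eq:
  assumes R: "ring R" and dir: "down_directed J" and down: "down_closed_in J I"
    and x0: "x0 \<in> J" "x0 \<in> I" and b: "b \<in> J" "b \<in> I"
    and g: "g \<in> carrier (ilim_module (indicator_pmod R I) J)"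
  shows "g b = g x0"
proof -
  obtain c where "g = const_family R I J c"
    using g carrier_ilim_down_closed[OF R dir down x0] by auto
  with x0 b show ?thesis by (simp add: const_family_def)
qed

lemma lower_pmod_indicator_iso:
  fixes R :: "'a ring" and I S :: "'p::order set"
  assumes R: "ring R" and dir: "\<And>p::'p. down_directed {x. way_below p x}"
    and inside: "\<And>p. p \<in> S \<Longrightarrow> down_closed_in {x. way_below p x} I \<and> (\<exists>x. way_below p x \<and> x \<in> I)"
    and outside: "\<And>p. p \<notin> S \<Longrightarrow> coinitial_in ({x. way_below p x} - I) {x. way_below p x}"
  shows "pmod_iso R (lower_pmod (indicator_pmod R I)) (indicator_pmod R S)"
proof -
  define V where "V p = {x. way_below p x}" for p :: 'p
  define base where "base p = (SOME x. x \<in> V p \<and> x \<in> I)" for p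
  define \<eta> where "\<eta> p = (if p \<in> S then (\<lambda>g :: 'p \<Rightarrow> 'a. g (base p)) else (\<lambda>_. \<zero>\<^bsub>R\<^esub>))" for p
  have V_anti: "V q \<subseteq> V p" if "p \<le> q" for p q
    unfolding V_def using way_below_mono_left that by auto
  have dirV: "down_directed (V p)" for p unfolding V_def by (rule dir)
  have downV: "down_closed_in (V p) I" and base: "base p \<in> V p" "base p \<in> I" if "p \<in> S" for p
  proof -
    show "down_closed_in (V p) I" using inside[OF that] unfolding V_def by auto
    have "\<exists>x. x \<in> V p \<and> x \<in> I" using inside[OF that] unfolding V_def by auto
    then show "base p \<in> V p" "base p \<in> I" unfolding base_def by (metis (mono_tags, lifting) someI_ex)+
  qed
  have coiV: "coinitial_in (V p - I) (V p)" if "p \<notin> S" for p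
    using outside[OF that] unfolding V_def by auto
  have iso: "linear_map R (ilim_module (indicator_pmod R I) (V p)) (fst (indicator_pmod R S) p) (\<eta> p) \<and>
      bij_betw (\<eta> p) (carrier (ilim_module (indicator_pmod R I) (V p))) (carrier (fst (indicator_pmod R S) p))"
    for p
    unfolding \<eta>_def fst_indicator_pmod
    by (rule ilim_indicator_iso_fiber[OF R dirV]) (simp_all add: downV base coiV)
  have natural: "\<eta> q (restrict g (V q)) = snd (indicator_pmod R S) p q (\<eta> p g)"
    if pq: "p \<le> q" and g: "g \<in> carrier (ilim_module (indicator_pmod R I) (V p))" for p q g
  proof (cases "q \<in> S")
    case qS: True
    have base_q: "base q \<in> V p" using base(1)[OF qS] V_anti[OF pq] by auto
    show ?thesis
    proof (cases "p \<in> S")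
      case True
      with qS base_q base[OF qS] show ?thesis
        using ilim_down_closed_value_eq[OF R dirV downV[OF True] base[OF True] base_q base(2)[OF qS] g]
        by (simp add: \<eta>_def indicator_pmod_simps)
    next
      case False
      then have "g = (\<lambda>x\<in>V p. \<zero>\<^bsub>R\<^esub>)"
        using g carrier_ilim_coinitial_complement[OF R coiV[OF False]] by simp
      with False qS base_q base[OF qS] show ?thesis by (simp add: \<eta>_def indicator_pmod_simps)
    qed
  qed (simp add: \<eta>_def indicator_pmod_simps)
  have "lower_pmod (indicator_pmod R I) =
      ((\<lambda>p. ilim_module (indicator_pmod R I) (V p)), (\<lambda>p q g. restrict g (V q)))"
    by (simp add: lower_pmod_def V_def)
  then show ?thesis
    unfolding pmod_iso_def case_prod_beta by (intro exI[of _ \<eta>]) (simp add: iso natural)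
qed

section \<open>The Scott topology of a continuous poset\<close>

lemma continuous_poset_directed:
  "continuous_poset TYPE('p::order) \<Longrightarrow> directed {x. way_below x (p::'p)}"
  unfolding continuous_poset_def by blast

lemma continuous_poset_is_sup:
  "continuous_poset TYPE('p::order) \<Longrightarrow> is_sup {x. way_below x (p::'p)} p"
  unfolding continuous_poset_def by blast

text \<open>The elements way below some element way below z form a directed set with
  supremum z, so x \<ll> z lies below one of them.\<close>

lemma way_below_interpolate:
  fixes x z :: "'p::order"
  assumes c: "continuous_poset TYPE('p)" and xz: "way_below x z"
  obtains w where "way_below x w" "way_below w z"
proof -
  define D where "D = {y. \<exists>w. way_below y w \<and> way_below w z}"
  have "directed D"
    unfolding directed_def
  proof (intro conjI ballI)
    obtain w where w: "way_below w z"
      using continuous_poset_directed[OF c, of z] unfolding directed_def by blast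
    obtain y where "way_below y w"
      using continuous_poset_directed[OF c, of w] unfolding directed_def by blast
    with w show "D \<noteq> {}" unfolding D_def by blast
  next
    fix y1 y2 assume "y1 \<in> D" "y2 \<in> D"
    then obtain w1 w2 where h: "way_below y1 w1" "way_below w1 z" "way_below y2 w2" "way_below w2 z"
      unfolding D_def by blast
    obtain w3 where w3: "way_below w3 z" "w1 \<le> w3" "w2 \<le> w3"
      using continuous_poset_directed[OF c, of z] h unfolding directed_def by blast
    have "way_below y1 w3" "way_below y2 w3" using h w3 way_below_mono_right by blast+
    then obtain y3 where "way_below y3 w3" "y1 \<le> y3" "y2 \<le> y3"
      using continuous_poset_directed[OF c, of w3] unfolding directed_def by blast
    with w3 show "\<exists>y3\<in>D. y1 \<le> y3 \<and> y2 \<le> y3" unfolding D_def by blast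
  qed
  moreover have "is_sup D z"
    unfolding is_sup_def
  proof (intro conjI allI impI ballI)
    fix d assume "d \<in> D"
    then obtain w where "way_below d w" "way_below w z" unfolding D_def by blast
    then show "d \<le> z" using way_below_imp_le order_trans by blast
  next
    fix u assume u: "\<forall>d\<in>D. d \<le> u"
    have "w \<le> u" if w: "way_below w z" for w
    proof -
      have "\<forall>y\<in>{y. way_below y w}. y \<le> u" using u w unfolding D_def by blast
      then show "w \<le> u" using continuous_poset_is_sup[OF c, of w] unfolding is_sup_def by blast
    qed
    then show "z \<le> u" using continuous_poset_is_sup[OF c, of z] unfolding is_sup_def by blast
  qed
  ultimately obtain d where d: "d \<in> D" "x \<le> d" using xz unfolding way_below_def by blast
  then obtain w where "way_below d w" "way_below w z" unfolding D_def by blast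
  with d that show ?thesis using way_below_mono_left by blast
qed

lemma istopology_scott_open: "istopology (scott_open :: 'p::order set \<Rightarrow> bool)"
  unfolding istopology_def
proof (intro conjI allI impI)
  fix S T :: "'p set" assume S: "scott_open S" and T: "scott_open T"
  show "scott_open (S \<inter> T)"
    unfolding scott_open_def
  proof (intro conjI allI impI)
    show "up_set (S \<inter> T)" using S T unfolding scott_open_def up_set_def by blast
  next
    fix D s assume h: "directed D \<and> is_sup D s \<and> s \<in> S \<inter> T"
    then obtain d1 d2 where d: "d1 \<in> D \<inter> S" "d2 \<in> D \<inter> T" using S T unfolding scott_open_def by blast
    then obtain d3 where "d3 \<in> D" "d1 \<le> d3" "d2 \<le> d3" using h unfolding directed_def by blast
    with d S T have "d3 \<in> D \<inter> (S \<inter> T)" unfolding scott_open_def up_set_def by blast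
    then show "D \<inter> (S \<inter> T) \<noteq> {}" by blast
  qed
next
  fix K :: "'p set set" assume K: "\<forall>K\<in>K. scott_open K"
  show "scott_open (\<Union>K)"
    unfolding scott_open_def
  proof (intro conjI allI impI)
    show "up_set (\<Union>K)" using K unfolding scott_open_def up_set_def by blast
  next
    fix D s assume h: "directed D \<and> is_sup D s \<and> s \<in> \<Union>K"
    then obtain k where "k \<in> K" "s \<in> k" by blast
    with K h have "D \<inter> k \<noteq> {}" unfolding scott_open_def by blast
    with \<open>k \<in> K\<close> show "D \<inter> \<Union>K \<noteq> {}" by blast
  qed
qed

lemma openin_scott_topology: "openin scott_topology = scott_open"
  unfolding scott_topology_def by (rule topology_inverse'[OF istopology_scott_open])

lemma topspace_scott_topology: "topspace (scott_topology :: 'p::order topology) = UNIV"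
proof -
  have "scott_open (UNIV :: 'p set)" unfolding scott_open_def up_set_def directed_def by blast
  then show ?thesis using openin_subset[of scott_topology UNIV] unfolding openin_scott_topology by blast
qed

lemma scott_open_way_above:
  fixes x :: "'p::order"
  assumes c: "continuous_poset TYPE('p)"
  shows "scott_open {y. way_below x y}"
  unfolding scott_open_def
proof (intro conjI allI impI)
  show "up_set {y. way_below x y}" unfolding up_set_def using way_below_mono_right by blast
next
  fix D s assume h: "directed D \<and> is_sup D s \<and> s \<in> {y. way_below x y}"
  then obtain y where y: "way_below x y" "way_below y s" using way_below_interpolate[OF c] by blast
  then obtain d where "d \<in> D" "y \<le> d" using h unfolding way_below_def by blast
  with y have "d \<in> D \<inter> {y. way_below x y}" using way_below_mono_right by blast
  then show "D \<inter> {y. way_below x y} \<noteq> {}" by blast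
qed

lemma scott_open_meets_way_below:
  fixes p :: "'p::order"
  assumes c: "continuous_poset TYPE('p)" and T: "scott_open T" "p \<in> T"
  shows "\<exists>x. way_below x p \<and> x \<in> T"
proof -
  have "{x. way_below x p} \<inter> T \<noteq> {}"
    using T continuous_poset_directed[OF c, of p] continuous_poset_is_sup[OF c, of p]
    unfolding scott_open_def by blast
  then show ?thesis by blast
qed

lemma scott_interior_up_set_iff:
  fixes U :: "'p::order set"
  assumes c: "continuous_poset TYPE('p)" and U: "up_set U"
  shows "p \<in> scott_topology interior_of U \<longleftrightarrow> (\<exists>x. way_below x p \<and> x \<in> U)"
proof
  assume "p \<in> scott_topology interior_of U"
  then obtain T where "scott_open T" "p \<in> T" "T \<subseteq> U"
    unfolding interior_of_def openin_scott_topology by blast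
  then show "\<exists>x. way_below x p \<and> x \<in> U" using scott_open_meets_way_below[OF c] by blast
next
  assume "\<exists>x. way_below x p \<and> x \<in> U"
  then obtain x where x: "way_below x p" "x \<in> U" by blast
  with U have "{y. way_below x y} \<subseteq> U" using way_below_imp_le unfolding up_set_def by blast
  with x show "p \<in> scott_topology interior_of U"
    unfolding interior_of_def openin_scott_topology using scott_open_way_above[OF c, of x] by blast
qed

lemma scott_closure_down_set_iff:
  fixes D :: "'p::order set"
  assumes c: "continuous_poset TYPE('p)" and D: "down_set D"
  shows "p \<in> scott_topology closure_of D \<longleftrightarrow> (\<forall>x. way_below x p \<longrightarrow> x \<in> D)"
proof (intro iffI allI impI)
  fix x assume "p \<in> scott_topology closure_of D" "way_below x p"
  then obtain d where "d \<in> D" "way_below x d"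
    using scott_open_way_above[OF c, of x] unfolding closure_of_def openin_scott_topology by blast
  with D show "x \<in> D" using way_below_imp_le unfolding down_set_def by blast
next
  assume D_below: "\<forall>x. way_below x p \<longrightarrow> x \<in> D"
  show "p \<in> scott_topology closure_of D"
    unfolding closure_of_def topspace_scott_topology openin_scott_topology
  proof (intro CollectI conjI UNIV_I allI impI)
    fix T assume "p \<in> T \<and> scott_open T"
    then obtain x where "way_below x p" "x \<in> T" using scott_open_meets_way_below[OF c] by blast
    with D_below show "\<exists>y\<in>D. y \<in> T" by blast
  qed
qed

lemma upper_pmod_indicator_up_set:
  fixes R :: "'a ring" and U :: "'p::order set"
  assumes R: "ring R" and c: "continuous_poset TYPE('p)" and U: "up_set U"
  shows "pmod_iso R (upper_pmod (indicator_pmod R U)) (indicator_pmod R (scott_topology interior_of U))"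
proof (rule upper_pmod_indicator_iso[OF R continuous_poset_directed[OF c]])
  fix p assume "p \<in> scott_topology interior_of U"
  then have "\<exists>x. way_below x p \<and> x \<in> U" unfolding scott_interior_up_set_iff[OF c U] .
  moreover have "up_closed_in {x. way_below x p} U"
    using U unfolding up_set_def up_closed_in_def by blast
  ultimately show "up_closed_in {x. way_below x p} U \<and> (\<exists>x. way_below x p \<and> x \<in> U)" by blast
next
  fix p assume "p \<notin> scott_topology interior_of U"
  then have "{x. way_below x p} - U = {x. way_below x p}"
    unfolding scott_interior_up_set_iff[OF c U] by blast
  then show "cofinal_in ({x. way_below x p} - U) {x. way_below x p}"
    unfolding cofinal_in_def by auto
qed

lemma upper_pmod_indicator_down_set:
  fixes R :: "'a ring" and D :: "'p::order set"
  assumes R: "ring R" and c: "continuous_poset TYPE('p)" and D: "down_set D"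
  shows "pmod_iso R (upper_pmod (indicator_pmod R D)) (indicator_pmod R (scott_topology closure_of D))"
proof (rule upper_pmod_indicator_iso[OF R continuous_poset_directed[OF c]])
  fix p assume "p \<in> scott_topology closure_of D"
  then have below: "\<forall>x. way_below x p \<longrightarrow> x \<in> D" unfolding scott_closure_down_set_iff[OF c D] .
  obtain x where "way_below x p"
    using continuous_poset_directed[OF c, of p] unfolding directed_def by blast
  with below show "up_closed_in {x. way_below x p} D \<and> (\<exists>x. way_below x p \<and> x \<in> D)"
    unfolding up_closed_in_def by blast
next
  fix p assume "p \<notin> scott_topology closure_of D"
  then obtain w where w: "way_below w p" "w \<notin> D"
    unfolding scott_closure_down_set_iff[OF c D] by blast
  show "cofinal_in ({x. way_below x p} - D) {x. way_below x p}"
    unfolding cofinal_in_def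
  proof
    fix x assume "x \<in> {x. way_below x p}"
    with w(1) obtain z where z: "z \<in> {x. way_below x p}" "x \<le> z" "w \<le> z"
      using directed_upper_bound[OF continuous_poset_directed[OF c, of p]] by blast
    from z(3) w(2) D have "z \<notin> D" unfolding down_set_def by blast
    with z show "\<exists>z\<in>{x. way_below x p} - D. x \<le> z" by blast
  qed
qed

section \<open>The way-below relation on real vectors\<close>

lemma way_below_vec_imp_less:
  fixes x y :: "real ^ 'n"
  assumes "way_below x y"
  shows "x $ i < y $ i"
proof -
  define D where "D = (\<lambda>c. y - (\<chi> j. c)) ` {0<..}"
  have "directed D"
    unfolding directed_def
  proof (intro conjI ballI)
    show "D \<noteq> {}" unfolding D_def by auto
  next
    fix d1 d2 assume "d1 \<in> D" "d2 \<in> D"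
    then obtain c1 c2 where c: "c1 > 0" "c2 > 0" "d1 = y - (\<chi> j. c1)" "d2 = y - (\<chi> j. c2)"
      unfolding D_def by auto
    then have "y - (\<chi> j. min c1 c2) \<in> D" "d1 \<le> y - (\<chi> j. min c1 c2)" "d2 \<le> y - (\<chi> j. min c1 c2)"
      unfolding D_def by (auto simp: less_eq_vec_def)
    then show "\<exists>z\<in>D. d1 \<le> z \<and> d2 \<le> z" by blast
  qed
  moreover have "is_sup D y"
    unfolding is_sup_def
  proof (intro conjI allI impI ballI)
    fix d assume "d \<in> D" then show "d \<le> y" unfolding D_def by (auto simp: less_eq_vec_def)
  next
    fix u assume u: "\<forall>d\<in>D. d \<le> u"
    show "y \<le> u" unfolding less_eq_vec_def
    proof
      fix j
      have "y $ j - c \<le> u $ j" if "c > 0" for c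
        using u that unfolding D_def less_eq_vec_def by auto
      then show "y $ j \<le> u $ j"
        by (metis add.commute diff_le_eq field_le_epsilon)
    qed
  qed
  ultimately obtain d where "d \<in> D" "x \<le> d"
    using assms order_refl unfolding way_below_def by blast
  then obtain c where "c > 0" "x \<le> y - (\<chi> j. c)" unfolding D_def by blast
  then have "x $ i \<le> y $ i - c" unfolding less_eq_vec_def by simp
  with \<open>c > 0\<close> show ?thesis by simp
qed

text \<open>If no element of D exceeds x in coordinate i, then lowering coordinate i of the
  supremum to the value of x gives a smaller upper bound.\<close>

lemma is_sup_vec_component_exceeds:
  fixes x s :: "real ^ 'n"
  assumes sup: "is_sup D s" and less: "x $ i < s $ i"
  shows "\<exists>d\<in>D. x $ i < d $ i"
proof (rule ccontr)
  assume "\<not> (\<exists>d\<in>D. x $ i < d $ i)"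
  then have le: "d $ i \<le> x $ i" if "d \<in> D" for d using that by auto
  define u where "u = (\<chi> j. if j = i then x $ i else s $ j)"
  have "d \<le> u" if "d \<in> D" for d
  proof -
    have "d \<le> s" using sup that unfolding is_sup_def by blast
    then show "d \<le> u" using le[OF that] by (simp add: less_eq_vec_def u_def)
  qed
  then have "s \<le> u" using sup unfolding is_sup_def by blast
  then have "s $ i \<le> u $ i" by (simp add: less_eq_vec_def)
  with less show False by (simp add: u_def)
qed

lemma way_below_vec_iff: "way_below (x :: real ^ 'n) y \<longleftrightarrow> (\<forall>i. x $ i < y $ i)"
proof
  assume "way_below x y"
  then show "\<forall>i. x $ i < y $ i" using way_below_vec_imp_less by blast
next
  assume xy: "\<forall>i. x $ i < y $ i"
  show "way_below x y"
    unfolding way_below_def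
  proof (intro allI impI)
    fix D s assume h: "directed D \<and> is_sup D s \<and> y \<le> s"
    have "\<exists>d\<in>D. x $ i < d $ i" for i
    proof (rule is_sup_vec_component_exceeds)
      show "is_sup D s" using h by blast
      show "x $ i < s $ i" using xy h less_eq_vec_def order_less_le_trans by metis
    qed
    then obtain d where d: "d i \<in> D" "x $ i < d i $ i" for i by metis
    obtain e where "e \<in> D" "\<forall>i. d i \<le> e"
      using directed_finite_upper_bound[of D "range d"] h d(1) by auto
    then have "x \<le> e"
      unfolding less_eq_vec_def using d(2) by (meson less_eq_vec_def less_imp_le order_trans)
    with \<open>e \<in> D\<close> show "\<exists>d\<in>D. x \<le> d" by blast
  qed
qed

lemma componentwise_less_nhd_le:
  fixes p x :: "real ^ 'n"
  assumes "\<forall>i. p $ i < x $ i"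
  obtains e where "e > 0" "\<And>u. dist u p < e \<Longrightarrow> u \<le> x"
proof -
  let ?gaps = "range (\<lambda>i. x $ i - p $ i)"
  have "0 < Min ?gaps" using assms by (simp add: Min_gr_iff)
  moreover have "u \<le> x" if "dist u p < Min ?gaps" for u
    unfolding less_eq_vec_def
  proof
    fix i
    have "\<bar>u $ i - p $ i\<bar> \<le> dist u p"
      using component_le_norm_cart[of "u - p" i] by (simp add: dist_norm)
    moreover have "Min ?gaps \<le> x $ i - p $ i" by simp
    ultimately show "u $ i \<le> x $ i" using that by linarith
  qed
  ultimately show ?thesis using that by blast
qed

lemma componentwise_greater_near:
  fixes p :: "real ^ 'n"
  assumes "e > 0"
  obtains x where "\<forall>i. p $ i < x $ i" "dist x p < e"
proof -
  define c where "c = e / (2 * real CARD('n))"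
  have "c > 0" using assms unfolding c_def by simp
  have "dist (p + (\<chi> i. c)) p = norm ((\<chi> i. c) :: real ^ 'n)" by (simp add: dist_norm)
  also have "\<dots> \<le> (\<Sum>i\<in>UNIV. \<bar>((\<chi> i. c) :: real ^ 'n) $ i\<bar>)" by (rule norm_le_l1_cart)
  also have "\<dots> = e / 2" using assms \<open>c > 0\<close> unfolding c_def by simp
  also have "\<dots> < e" using assms by simp
  finally show ?thesis using that[of "p + (\<chi> i. c)"] \<open>c > 0\<close> by simp
qed

lemma closure_up_set_vec_iff:
  fixes U :: "(real ^ 'n) set"
  assumes U: "up_set U"
  shows "p \<in> closure U \<longleftrightarrow> (\<forall>x. way_below p x \<longrightarrow> x \<in> U)"
  unfolding way_below_vec_iff
proof (intro iffI allI impI)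
  fix x assume "p \<in> closure U" "\<forall>i. p $ i < x $ i"
  then obtain e where e: "e > 0" "\<And>u. dist u p < e \<Longrightarrow> u \<le> x"
    using componentwise_less_nhd_le by blast
  then obtain u where "u \<in> U" "dist u p < e"
    using \<open>p \<in> closure U\<close> unfolding closure_approachable by blast
  with e U show "x \<in> U" unfolding up_set_def by blast
next
  assume above: "\<forall>x. (\<forall>i. p $ i < x $ i) \<longrightarrow> x \<in> U"
  show "p \<in> closure U" unfolding closure_approachable
  proof (intro allI impI)
    fix e :: real assume "e > 0"
    then obtain x where "\<forall>i. p $ i < x $ i" "dist x p < e" by (rule componentwise_greater_near)
    with above show "\<exists>y\<in>U. dist y p < e" by blast
  qed
qed

lemma interior_down_set_vec_iff:
  fixes D :: "(real ^ 'n) set"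
  assumes D: "down_set D"
  shows "p \<in> interior D \<longleftrightarrow> (\<exists>x. way_below p x \<and> x \<in> D)"
  unfolding way_below_vec_iff
proof
  assume "p \<in> interior D"
  then obtain e where "e > 0" "ball p e \<subseteq> D" unfolding mem_interior by blast
  moreover obtain x where "\<forall>i. p $ i < x $ i" "dist x p < e"
    using componentwise_greater_near[OF \<open>e > 0\<close>] by blast
  ultimately show "\<exists>x. (\<forall>i. p $ i < x $ i) \<and> x \<in> D"
    by (metis dist_commute mem_ball subsetD)
next
  assume "\<exists>x. (\<forall>i. p $ i < x $ i) \<and> x \<in> D"
  then obtain x where x: "\<forall>i. p $ i < x $ i" "x \<in> D" by blast
  then obtain e where e: "e > 0" "\<And>u. dist u p < e \<Longrightarrow> u \<le> x"
    using componentwise_less_nhd_le by blast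
  have "ball p e \<subseteq> D"
  proof
    fix u assume "u \<in> ball p e"
    then have "u \<le> x" using e(2) by (simp add: dist_commute)
    with x(2) D show "u \<in> D" unfolding down_set_def by blast
  qed
  with e(1) show "p \<in> interior D" unfolding mem_interior by blast
qed

lemma down_directed_way_above_vec: "down_directed {x. way_below (p :: real ^ 'n) x}"
  unfolding down_directed_def
proof (intro ballI)
  fix x y assume "x \<in> {x. way_below p x}" "y \<in> {x. way_below p x}"
  then have "way_below p (\<chi> i. min (x $ i) (y $ i))" "(\<chi> i. min (x $ i) (y $ i)) \<le> x"
    "(\<chi> i. min (x $ i) (y $ i)) \<le> y"
    unfolding way_below_vec_iff less_eq_vec_def by simp_all
  then show "\<exists>z\<in>{x. way_below p x}. z \<le> x \<and> z \<le> y" by blast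
qed

lemma lower_pmod_indicator_up_set_vec:
  fixes R :: "'a ring" and U :: "(real ^ 'n) set"
  assumes R: "ring R" and U: "up_set U"
  shows "pmod_iso R (lower_pmod (indicator_pmod R U)) (indicator_pmod R (closure U))"
proof (rule lower_pmod_indicator_iso[OF R down_directed_way_above_vec])
  fix p :: "real ^ 'n" assume "p \<in> closure U"
  then have above: "\<forall>x. way_below p x \<longrightarrow> x \<in> U" unfolding closure_up_set_vec_iff[OF U] .
  have "way_below p (p + (\<chi> i. 1))" unfolding way_below_vec_iff by simp
  with above show "down_closed_in {x. way_below p x} U \<and> (\<exists>x. way_below p x \<and> x \<in> U)"
    unfolding down_closed_in_def by blast
next
  fix p :: "real ^ 'n" assume "p \<notin> closure U"
  then obtain w where w: "way_below p w" "w \<notin> U" unfolding closure_up_set_vec_iff[OF U] by blast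
  show "coinitial_in ({x. way_below p x} - U) {x. way_below p x}"
    unfolding coinitial_in_def
  proof
    fix y assume "y \<in> {x. way_below p x}"
    with w(1) obtain z where z: "z \<in> {x. way_below p x}" "z \<le> w" "z \<le> y"
      using down_directed_lower_bound[OF down_directed_way_above_vec] by blast
    from z(2) w(2) U have "z \<notin> U" unfolding up_set_def by blast
    with z show "\<exists>z\<in>{x. way_below p x} - U. z \<le> y" by blast
  qed
qed

lemma lower_pmod_indicator_down_set_vec:
  fixes R :: "'a ring" and D :: "(real ^ 'n) set"
  assumes R: "ring R" and D: "down_set D"
  shows "pmod_iso R (lower_pmod (indicator_pmod R D)) (indicator_pmod R (interior D))"
proof (rule lower_pmod_indicator_iso[OF R down_directed_way_above_vec])
  fix p :: "real ^ 'n" assume "p \<in> interior D"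
  then have "\<exists>x. way_below p x \<and> x \<in> D" unfolding interior_down_set_vec_iff[OF D] .
  moreover have "down_closed_in {x. way_below p x} D"
    using D unfolding down_set_def down_closed_in_def by blast
  ultimately show "down_closed_in {x. way_below p x} D \<and> (\<exists>x. way_below p x \<and> x \<in> D)" by blast
next
  fix p :: "real ^ 'n" assume "p \<notin> interior D"
  then have "{x. way_below p x} - D = {x. way_below p x}"
    unfolding interior_down_set_vec_iff[OF D] by blast
  then show "coinitial_in ({x. way_below p x} - D) {x. way_below p x}"
    unfolding coinitial_in_def by auto
qed

theorem mainTheorem8:
  fixes R :: "'a ring"
  assumes "cring R"
    and "continuous_poset TYPE('p::order)"
  shows "(\<forall>U :: 'p set. up_set U \<longrightarrow>
            pmod_iso R (upper_pmod (indicator_pmod R U))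
                       (indicator_pmod R (scott_topology interior_of U)))
       \<and> (\<forall>D :: 'p set. down_set D \<longrightarrow>
            pmod_iso R (upper_pmod (indicator_pmod R D))
                       (indicator_pmod R (scott_topology closure_of D)))
       \<and> (\<forall>U :: (real ^ 'n) set. up_set U \<longrightarrow>
            pmod_iso R (lower_pmod (indicator_pmod R U)) (indicator_pmod R (closure U)))
       \<and> (\<forall>D :: (real ^ 'n) set. down_set D \<longrightarrow>
            pmod_iso R (lower_pmod (indicator_pmod R D)) (indicator_pmod R (interior D)))"
proof -
  have R: "ring R" using assms(1) by (rule cring.axioms(1))
  show ?thesis
    using upper_pmod_indicator_up_set[OF R assms(2)] upper_pmod_indicator_down_set[OF R assms(2)]
      lower_pmod_indicator_up_set_vec[OF R] lower_pmod_indicator_down_set_vec[OF R]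
    by blast
qed

end
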